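(* Let $q$ be a prime power, $M\geq 2$ an integer, and let $f$ be a SCIM polynomial over $\mathbb{F}_{q^2}$ of odd degree $d$ such that $f(x^M)$ has a SCIM factor $g$ of degree $d$. Let $C_f\in\mathrm{U}(d,\mathbb{F}_{q^2})$ be a matrix with characteristic polynomial $f$. Then there exists $\alpha\in \mathrm{U}(d,\mathbb{F}_{q^2})$ such that $\alpha^M=C_f$.
   Context: For $a\in\mathbb{F}_{q^2}$ write $\bar a=a^q$, extended coefficientwise to matrices and polynomials. Let $\Lambda_n$ be the $n\times n$ matrix with $1$'s on the antidiagonal and $0$ elsewhere; the unitary group is $\mathrm{U}(n,\mathbb{F}_{q^2})=\{A\in \mathrm{GL}(n,\mathbb{F}_{q^2}) : A\Lambda_n\bar A^{t}=\Lambda_n\}$. For a monic polynomial $f$ of degree $d$ with $f(0)\neq 0$ define $\widetilde{f}(t)=\overline{f(0)}^{-1}t^d\bar f(t^{-1})$. A SCIM polynomial is a monic polynomial $f\in\mathbb{F}_{q^2}[t]$ with $f(0)\neq0$, irreducible over $\mathbb{F}_{q^2}$, with $\widetilde f=f$. *)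

theory Defs
  imports "Jordan_Normal_Form.Char_Poly" "HOL-Computational_Algebra.Polynomial"
begin

definition qconj :: "nat \<Rightarrow> 'a::field \<Rightarrow> 'a" where
  "qconj q a = a ^ q"

definition mat_qconj :: "nat \<Rightarrow> 'a::field mat \<Rightarrow> 'a mat" where
  "mat_qconj q A = map_mat (qconj q) A"

definition poly_qconj :: "nat \<Rightarrow> 'a::field poly \<Rightarrow> 'a poly" where
  "poly_qconj q f = map_poly (qconj q) f"

definition antidiag :: "nat \<Rightarrow> 'a::field mat" where
  "antidiag n = mat n n (\<lambda>(i, j). if i + j = n - 1 then 1 else 0)"

definition unitary_group :: "nat \<Rightarrow> nat \<Rightarrow> 'a::field mat set" where
  "unitary_group q n = {A. A \<in> carrier_mat n n \<and> invertible_mat A \<and>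
      A * antidiag n * transpose_mat (mat_qconj q A) = antidiag n}"

text \<open>f~(t) = conj(f(0))^{-1} t^d conj(f)(1/t), with d = deg f; t^d conj(f)(1/t) is the reflected
  polynomial of conj(f) (which has degree d).\<close>
definition poly_tilde :: "nat \<Rightarrow> 'a::field poly \<Rightarrow> 'a poly" where
  "poly_tilde q f = Polynomial.smult (inverse (qconj q (poly f 0)))
      (reflect_poly (poly_qconj q f))"

definition SCIM :: "nat \<Rightarrow> 'a::field poly \<Rightarrow> bool" where
  "SCIM q f \<longleftrightarrow> monic f \<and> poly f 0 \<noteq> 0 \<and> irreducible f \<and> poly_tilde q f = f"

end

(*
  Let \<theta> be a root of g. Then \<theta>^M is a root of the irreducible f, and since deg g = deg f
  the fields F(\<theta>) and F(\<theta>^M) coincide, so \<theta> = B(\<theta>^M) for a polynomial B, i.e.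
  B^M \<equiv> t (mod f). As g is self-conjugate-reciprocal, \<theta>^-1 is a root of conj(g); conjugating
  B(t^M) \<equiv> t (mod g) then gives conj(B)(\<theta>^-M) = \<theta>^-1, i.e. B(t) conj(B)(t^-1) \<equiv> 1 (mod f).
  By Cayley-Hamilton f(C) = 0, so \<alpha> = B(C) satisfies \<alpha>^M = C. Unitarity of C says
  \<Lambda> conj(C)^T = C^-1 \<Lambda>, hence \<alpha> \<Lambda> conj(\<alpha>)^T = B(C) conj(B)(C^-1) \<Lambda> = \<Lambda>.
  Statements about \<theta> are expressed as congruences modulo g throughout.
*)
theory Submission
  imports Defs "HOL-Number_Theory.Cong"
begin

section \<open>Polynomials evaluated at square matrices\<close>

lemma zero_smult_mat [simp]: "(0::'a::mult_zero) \<cdot>\<^sub>m A = 0\<^sub>m (dim_row A) (dim_col A)"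
  by (intro eq_matI) auto

lemma one_smult_mat [simp]: "(1::'a::monoid_mult) \<cdot>\<^sub>m A = A"
  by (intro eq_matI) auto

fun poly_mat_upto :: "nat \<Rightarrow> 'a::comm_ring_1 poly \<Rightarrow> 'a mat \<Rightarrow> 'a mat" where
  "poly_mat_upto 0 p A = 0\<^sub>m (dim_row A) (dim_row A)"
| "poly_mat_upto (Suc k) p A = poly_mat_upto k p A + coeff p k \<cdot>\<^sub>m A ^\<^sub>m k"

definition poly_mat :: "'a::comm_ring_1 poly \<Rightarrow> 'a mat \<Rightarrow> 'a mat" where
  "poly_mat p A = poly_mat_upto (Suc (degree p)) p A"

lemma poly_mat_upto_carrier [simp]: "A \<in> carrier_mat n n \<Longrightarrow> poly_mat_upto k p A \<in> carrier_mat n n"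
  by (induction k) auto

lemma poly_mat_carrier [simp]: "A \<in> carrier_mat n n \<Longrightarrow> poly_mat p A \<in> carrier_mat n n"
  unfolding poly_mat_def by (rule poly_mat_upto_carrier)

lemma poly_mat_upto_eq_poly_mat:
  assumes A: "A \<in> carrier_mat n n" and k: "degree p < k"
  shows "poly_mat_upto k p A = poly_mat p A"
proof -
  have "Suc (degree p) \<le> k" using k by simp
  then show ?thesis
  proof (induction k rule: dec_induct)
    case (step k)
    then have "coeff p k = 0" by (simp add: coeff_eq_0)
    then show ?case using step.IH A by (simp add: poly_mat_def)
  qed (simp add: poly_mat_def)
qed

lemma pow_mat_Suc_left: "A \<in> carrier_mat n n \<Longrightarrow> A ^\<^sub>m Suc k = A * A ^\<^sub>m k"
proof (induction k)
  case (Suc k)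
  then have "A ^\<^sub>m Suc (Suc k) = A * (A ^\<^sub>m k * A)"
    by (simp del: pow_mat.simps(2) add: pow_mat.simps(2)[of A "Suc k"] assoc_mult_mat[of A n n _ n A n])
  then show ?case by simp
qed simp

lemma poly_mat_upto_pCons:
  assumes A: "A \<in> carrier_mat n n"
  shows "poly_mat_upto (Suc k) (pCons a p) A = a \<cdot>\<^sub>m 1\<^sub>m n + A * poly_mat_upto k p A"
proof (induction k)
  case 0
  show ?case using A by (intro eq_matI) auto
next
  case (Suc k)
  have P: "poly_mat_upto k p A \<in> carrier_mat n n" and Ak: "A ^\<^sub>m k \<in> carrier_mat n n"
    using A by auto
  have "A * poly_mat_upto (Suc k) p A = A * poly_mat_upto k p A + A * (coeff p k \<cdot>\<^sub>m A ^\<^sub>m k)"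
    using Ak by (simp add: mult_add_distrib_mat[OF A P])
  also have "A * (coeff p k \<cdot>\<^sub>m A ^\<^sub>m k) = coeff p k \<cdot>\<^sub>m A ^\<^sub>m Suc k"
    by (simp add: mult_smult_distrib[OF A Ak] pow_mat_Suc_left[OF A] del: pow_mat.simps)
  finally show ?case
    using Suc A P Ak by (simp add: assoc_add_mat[of _ n n] del: pow_mat.simps)
qed

lemma poly_mat_pCons:
  assumes A: "A \<in> carrier_mat n n"
  shows "poly_mat (pCons a p) A = a \<cdot>\<^sub>m 1\<^sub>m n + A * poly_mat p A"
proof -
  have "poly_mat (pCons a p) A = poly_mat_upto (Suc (Suc (degree p))) (pCons a p) A"
    using A by (intro poly_mat_upto_eq_poly_mat[symmetric]) (auto simp: degree_pCons_le le_imp_less_Suc)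
  then show ?thesis using A by (simp only: poly_mat_upto_pCons poly_mat_def)
qed

lemma poly_mat_0 [simp]: "poly_mat 0 A = 0\<^sub>m (dim_row A) (dim_row A)"
  by (simp add: poly_mat_def)

context
  fixes A :: "'a::comm_ring_1 mat" and n :: nat
  assumes A: "A \<in> carrier_mat n n"
begin

lemma poly_mat_dim [simp]: "dim_row (poly_mat p A) = n" "dim_col (poly_mat p A) = n"
  using poly_mat_carrier[OF A] by auto

lemma poly_mat_const: "poly_mat [:c:] A = c \<cdot>\<^sub>m 1\<^sub>m n"
  using poly_mat_pCons[OF A, of c 0] A by simp

lemma poly_mat_1: "poly_mat 1 A = 1\<^sub>m n"
  using poly_mat_const[of 1] by (simp add: one_pCons)

lemma poly_mat_X: "poly_mat [:0, 1:] A = A"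
  using A by (simp add: poly_mat_pCons poly_mat_1)

lemma poly_mat_add: "poly_mat (p + r) A = poly_mat p A + poly_mat r A"
proof (induction p arbitrary: r rule: pCons_induct)
  case (pCons a p)
  obtain b r' where r: "r = pCons b r'" by (cases r)
  have P: "poly_mat p A \<in> carrier_mat n n" "poly_mat r' A \<in> carrier_mat n n" using A by auto
  have "poly_mat (pCons a p + r) A = (a + b) \<cdot>\<^sub>m 1\<^sub>m n + A * (poly_mat p A + poly_mat r' A)"
    using pCons.IH r A by (simp add: poly_mat_pCons)
  then show ?case
    unfolding r using A P by (simp add: poly_mat_pCons mult_add_distrib_mat[of A n n])
      (intro eq_matI, auto simp: algebra_simps)
qed (use A in simp)

lemma poly_mat_smult: "poly_mat (Polynomial.smult c p) A = c \<cdot>\<^sub>m poly_mat p A"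
proof (induction p rule: pCons_induct)
  case (pCons a p)
  have P: "poly_mat p A \<in> carrier_mat n n" using A by auto
  show ?case
    using pCons.IH A P by (simp add: poly_mat_pCons mult_smult_distrib)
      (intro eq_matI, auto simp: algebra_simps)
qed (use A in simp)

lemma poly_mat_mult: "poly_mat (p * r) A = poly_mat p A * poly_mat r A"
proof (induction p rule: pCons_induct)
  case (pCons a p)
  have P: "poly_mat p A \<in> carrier_mat n n" "poly_mat r A \<in> carrier_mat n n" using A by auto
  have C: "A * (poly_mat p A * poly_mat r A) \<in> carrier_mat n n" using A P by auto
  have "poly_mat (pCons a p * r) A = a \<cdot>\<^sub>m poly_mat r A + A * (poly_mat p A * poly_mat r A)"
    using pCons.IH A by (simp add: poly_mat_add poly_mat_smult poly_mat_pCons left_add_zero_mat[OF C])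
  also have "\<dots> = (a \<cdot>\<^sub>m 1\<^sub>m n) * poly_mat r A + (A * poly_mat p A) * poly_mat r A"
    using mult_smult_assoc_mat[of "1\<^sub>m n" n n "poly_mat r A" n a] assoc_mult_mat[OF A P] P by simp
  also have "\<dots> = (a \<cdot>\<^sub>m 1\<^sub>m n + A * poly_mat p A) * poly_mat r A"
    by (rule add_mult_distrib_mat[symmetric, of _ n n]) (use A P in auto)
  finally show ?case using A by (simp add: poly_mat_pCons)
qed (use A in simp)

lemma poly_mat_power: "poly_mat (p ^ k) A = poly_mat p A ^\<^sub>m k"
proof (induction k)
  case (Suc k)
  have "poly_mat (p ^ Suc k) A = poly_mat (p ^ k * p) A" by (simp only: power_Suc2)
  then show ?case using Suc by (simp add: poly_mat_mult)
qed (simp add: poly_mat_1)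

lemma poly_mat_commute: "poly_mat p A * poly_mat r A = poly_mat r A * poly_mat p A"
  by (metis poly_mat_mult mult.commute)

end

lemma poly_mat_pcompose:
  assumes A: "A \<in> carrier_mat n n"
  shows "poly_mat (pcompose p r) A = poly_mat p (poly_mat r A)"
proof (induction p rule: pCons_induct)
  case (pCons a p)
  have R: "poly_mat r A \<in> carrier_mat n n" using A by simp
  show ?case
    using pCons.IH A R by (simp add: pcompose_pCons poly_mat_add poly_mat_const poly_mat_mult poly_mat_pCons[OF R])
qed (use A in simp)

lemma transpose_poly_mat:
  assumes A: "A \<in> carrier_mat n n"
  shows "transpose_mat (poly_mat p A) = poly_mat p (transpose_mat A)"
proof (induction p rule: pCons_induct)
  case (pCons a p)
  have P: "poly_mat p A \<in> carrier_mat n n" using A by simp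
  have "A * poly_mat p A = poly_mat p A * A"
    using poly_mat_commute[OF A, of "[:0, 1:]" p] by (simp add: poly_mat_X[OF A])
  then have "transpose_mat (A * poly_mat p A) = transpose_mat A * transpose_mat (poly_mat p A)"
    by (simp add: transpose_mult[OF P A])
  moreover have "transpose_mat (a \<cdot>\<^sub>m 1\<^sub>m n) = a \<cdot>\<^sub>m 1\<^sub>m n"
    by (intro eq_matI) auto
  moreover have "transpose_mat (a \<cdot>\<^sub>m 1\<^sub>m n + A * poly_mat p A)
      = transpose_mat (a \<cdot>\<^sub>m 1\<^sub>m n) + transpose_mat (A * poly_mat p A)"
    by (rule transpose_add) (use A P in auto)
  ultimately show ?case
    using A by (simp add: poly_mat_pCons pCons.IH)
qed (use A in simp)

lemma (in comm_ring_hom) map_mat_poly_mat: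
  assumes A: "A \<in> carrier_mat n n"
  shows "map_mat hom (poly_mat p A) = poly_mat (map_poly hom p) (map_mat hom A)"
proof (induction p rule: pCons_induct)
  case (pCons a p)
  have P: "poly_mat p A \<in> carrier_mat n n" using A by simp
  have "map_mat hom (poly_mat (pCons a p) A) = hom a \<cdot>\<^sub>m 1\<^sub>m n + map_mat hom A * map_mat hom (poly_mat p A)"
    using A P by (simp add: poly_mat_pCons mat_hom_mult[OF A P, symmetric]) (intro eq_matI, auto simp: hom_add)
  then show ?case
    using A by (simp add: map_poly_pCons_hom poly_mat_pCons pCons.IH)
qed (use A in \<open>auto intro!: eq_matI\<close>)

lemma poly_mat_intertwine:
  assumes L: "L \<in> carrier_mat n n" and Y: "Y \<in> carrier_mat n n" and Z: "Z \<in> carrier_mat n n"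
    and LY: "L * Y = Z * L"
  shows "L * poly_mat p Y = poly_mat p Z * L"
proof (induction p rule: pCons_induct)
  case (pCons a p)
  have PY: "poly_mat p Y \<in> carrier_mat n n" and PZ: "poly_mat p Z \<in> carrier_mat n n"
    using Y Z by auto
  have "L * (a \<cdot>\<^sub>m 1\<^sub>m n + Y * poly_mat p Y) = L * (a \<cdot>\<^sub>m 1\<^sub>m n) + L * (Y * poly_mat p Y)"
    by (rule mult_add_distrib_mat[OF L]) (use Y PY in auto)
  moreover have "(a \<cdot>\<^sub>m 1\<^sub>m n + Z * poly_mat p Z) * L = (a \<cdot>\<^sub>m 1\<^sub>m n) * L + Z * poly_mat p Z * L"
    by (rule add_mult_distrib_mat[OF _ _ L]) (use Z PZ in auto)
  moreover have "L * (Y * poly_mat p Y) = Z * poly_mat p Z * L"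
    using assoc_mult_mat[OF L Y PY] LY pCons.IH assoc_mult_mat[OF Z L PY] assoc_mult_mat[OF Z PZ L]
    by metis
  moreover have "L * (a \<cdot>\<^sub>m 1\<^sub>m n) = (a \<cdot>\<^sub>m 1\<^sub>m n) * L"
    using mult_smult_distrib[of L n n "1\<^sub>m n" n a] mult_smult_assoc_mat[of "1\<^sub>m n" n n L n a] L
    by simp
  ultimately show ?case
    using Y Z by (simp add: poly_mat_pCons)
qed (use L Y Z in simp)

lemma poly_mat_cong:
  fixes A :: "'a::field mat"
  assumes A: "A \<in> carrier_mat n n" and f: "poly_mat f A = 0\<^sub>m n n" and pr: "[p = r] (mod f)"
  shows "poly_mat p A = poly_mat r A"
proof -
  obtain h where "p = r + f * h"
    using pr by (metis cong_iff_dvd_diff dvdE diff_eq_eq add.commute)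
  then show ?thesis using A f by (simp add: poly_mat_add poly_mat_mult)
qed

lemma invertible_poly_mat:
  assumes A: "A \<in> carrier_mat n n" and inv: "poly_mat p A * poly_mat r A = 1\<^sub>m n"
  shows "invertible_mat (poly_mat p A)"
  unfolding invertible_mat_def inverts_mat_def
  using inv poly_mat_commute[OF A, of p r] A by (auto intro!: exI[of _ "poly_mat r A"])

section \<open>The Cayley-Hamilton theorem\<close>

definition coeff_mat :: "'a::zero poly mat \<Rightarrow> nat \<Rightarrow> 'a mat" where
  "coeff_mat P k = map_mat (\<lambda>p. coeff p k) P"

lemma dim_char_poly_matrix [simp]:
  "dim_row (char_poly_matrix A) = dim_row A" "dim_col (char_poly_matrix A) = dim_col A"
  by (simp_all add: char_poly_matrix_def)

lemma coeff_mat_char_poly_matrix_mult: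
  fixes A :: "'a::comm_ring_1 mat"
  assumes A: "A \<in> carrier_mat n n" and Q: "Q \<in> carrier_mat n m"
  shows "coeff_mat (char_poly_matrix A * Q) k = coeff_mat (map_mat (pCons 0) Q) k - A * coeff_mat Q k"
proof -
  have "coeff ((char_poly_matrix A * Q) $$ (i, j)) k
      = coeff (pCons 0 (Q $$ (i, j))) k - (\<Sum>l<n. A $$ (i, l) * coeff (Q $$ (l, j)) k)"
    if i: "i < n" and j: "j < m" for i j
  proof -
    have "(char_poly_matrix A * Q) $$ (i, j) = (\<Sum>l<n. (if i = l then pCons 0 (Q $$ (l, j)) else 0)
        - Polynomial.smult (A $$ (i, l)) (Q $$ (l, j)))"
      using A Q i j by (auto simp: char_poly_matrix_def scalar_prod_def atLeast0LessThan intro!: sum.cong)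
    then show ?thesis
      using i by (simp add: coeff_sum sum_subtractf if_distrib[of "\<lambda>p. coeff p k"] cong: if_cong)
  qed
  then show ?thesis
    using A Q by (intro eq_matI) (simp_all add: coeff_mat_def scalar_prod_def atLeast0LessThan)
qed

(* Telescoping: the k-th coefficient matrix of p I = (tI - A) Q is Q_(k-1) - A Q_k. *)
lemma poly_mat_upto_char_poly_matrix_factor:
  fixes A :: "'a::comm_ring_1 mat"
  assumes A: "A \<in> carrier_mat n n" and Q: "Q \<in> carrier_mat n n"
    and pQ: "p \<cdot>\<^sub>m 1\<^sub>m n = char_poly_matrix A * Q"
  shows "poly_mat_upto k p A = - (A ^\<^sub>m k * coeff_mat (map_mat (pCons 0) Q) k)"
proof (induction k)
  case 0
  show ?case using A Q by (intro eq_matI) (auto simp: coeff_mat_def scalar_prod_def)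
next
  case (Suc k)
  define S where "S = coeff_mat (map_mat (pCons 0) Q) k"
  define Qk where "Qk = coeff_mat Q k"
  have S: "S \<in> carrier_mat n n" and Qk: "Qk \<in> carrier_mat n n" and Ak: "A ^\<^sub>m k \<in> carrier_mat n n"
    using A Q by (auto simp: S_def Qk_def coeff_mat_def)
  have shift: "coeff_mat (map_mat (pCons 0) Q) (Suc k) = Qk"
    using Q by (intro eq_matI) (auto simp: coeff_mat_def Qk_def)
  have "coeff p k \<cdot>\<^sub>m 1\<^sub>m n = coeff_mat (p \<cdot>\<^sub>m 1\<^sub>m n) k"
    by (intro eq_matI) (auto simp: coeff_mat_def)
  also have "\<dots> = S - A * Qk"
    unfolding pQ S_def Qk_def by (rule coeff_mat_char_poly_matrix_mult[OF A Q])
  finally have "coeff p k \<cdot>\<^sub>m A ^\<^sub>m k = A ^\<^sub>m k * (S - A * Qk)"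
    using mult_smult_distrib[OF Ak one_carrier_mat, of "coeff p k"] A by simp
  also have "\<dots> = A ^\<^sub>m k * S - A ^\<^sub>m Suc k * Qk"
    using A S Qk Ak by (simp add: mult_minus_distrib_mat[OF Ak] assoc_mult_mat[OF Ak A Qk])
  finally have "coeff p k \<cdot>\<^sub>m A ^\<^sub>m k = A ^\<^sub>m k * S - A ^\<^sub>m Suc k * Qk" .
  then show ?case
    using Suc A S Qk Ak unfolding shift S_def[symmetric]
    by (intro eq_matI) (auto simp del: pow_mat.simps)
qed

theorem cayley_hamilton:
  fixes A :: "'a::comm_ring_1 mat"
  assumes A: "A \<in> carrier_mat n n"
  shows "poly_mat (char_poly A) A = 0\<^sub>m n n"
proof -
  define Q where "Q = adj_mat (char_poly_matrix A)"
  have Q: "Q \<in> carrier_mat n n" and PQ: "char_poly A \<cdot>\<^sub>m 1\<^sub>m n = char_poly_matrix A * Q"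
    using adj_mat[OF char_poly_matrix_closed[OF A]] unfolding Q_def char_poly_def by auto
  have "finite ((\<lambda>(i, j). degree (Q $$ (i, j))) ` ({..<n} \<times> {..<n}))" by simp
  then obtain K where "\<forall>d \<in> (\<lambda>(i, j). degree (Q $$ (i, j))) ` ({..<n} \<times> {..<n}). d < K"
    using finite_nat_set_iff_bounded by blast
  then have K: "degree (Q $$ (i, j)) < K" if "i < n" "j < n" for i j
    using that by fastforce
  define k where "k = Suc (degree (char_poly A) + K)"
  have "coeff_mat (map_mat (pCons 0) Q) k = 0\<^sub>m n n"
    using Q by (intro eq_matI) (auto simp: coeff_mat_def k_def intro!: coeff_eq_0 less_le_trans[OF K])
  then have "poly_mat_upto k (char_poly A) A = 0\<^sub>m n n"
    using poly_mat_upto_char_poly_matrix_factor[OF A Q PQ, of k] A by (auto intro!: eq_matI)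
  then show ?thesis
    using poly_mat_upto_eq_poly_mat[OF A, of "char_poly A" k] by (simp add: k_def)
qed

section \<open>Congruences of composed polynomials\<close>

lemma pcompose_X: "pcompose [:0, 1:] (q :: 'a::comm_semiring_1 poly) = q"
  by (simp add: pcompose_pCons)

lemma pcompose_monom_1: "pcompose (monom 1 k) (q :: 'a::comm_ring_1 poly) = q ^ k"
  by (simp add: monom_altdef pcompose_hom.hom_power pcompose_pCons)

lemma cong_pcompose_left:
  fixes p r m :: "'a::field poly"
  assumes "[p = r] (mod m)"
  shows "[pcompose h p = pcompose h r] (mod m)"
  by (induction h rule: pCons_induct) (use assms in \<open>simp_all add: pcompose_pCons cong_add cong_mult\<close>)

lemma cong_pcompose_right:
  fixes p r h g m :: "'a::field poly"
  assumes "[p = r] (mod h)" and "g dvd pcompose h m"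
  shows "[pcompose p m = pcompose r m] (mod g)"
proof -
  have "pcompose h m dvd pcompose (p - r) m"
    using assms(1) by (simp add: cong_iff_dvd_diff pcompose_hom.hom_dvd)
  then have "g dvd pcompose (p - r) m"
    using assms(2) by (rule dvd_trans[rotated])
  then show ?thesis by (simp add: cong_iff_dvd_diff pcompose_diff)
qed

lemma ideal_contains_1_if_irreducible_not_dvd:
  fixes f r :: "'a::field poly"
  assumes irr: "irreducible f" and nd: "\<not> f dvd r" and Pf: "P f" and Pr: "P r"
    and add: "\<And>a b. P a \<Longrightarrow> P b \<Longrightarrow> P (a + b)" and mult: "\<And>a b. P a \<Longrightarrow> P (b * a)"
  shows "P 1"
proof -
  have "P r \<and> r \<noteq> 0" using Pr nd by auto
  then obtain h where h: "P h" "h \<noteq> 0"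
    and min: "\<And>h'. P h' \<and> h' \<noteq> 0 \<Longrightarrow> degree h \<le> degree h'"
    using ex_has_least_nat[of "\<lambda>h. P h \<and> h \<noteq> 0" r degree] by blast
  have h_dvd: "h dvd a" if "P a" for a
  proof -
    have "P (a + (- (a div h)) * h)" using that h(1) by (intro add mult)
    then have "P (a mod h)" by (simp add: minus_div_mult_eq_mod)
    then have "a mod h = 0" using min degree_mod_less[OF h(2), of a] by force
    then show ?thesis by (simp add: mod_eq_0_iff_dvd)
  qed
  have "\<not> f dvd h" using h_dvd[OF Pr] nd dvd_trans by blast
  then have "is_unit h" using irreducibleD'[OF irr h_dvd[OF Pf]] by blast
  then obtain k where "1 = k * h" by (metis dvdE mult.commute)
  then show ?thesis using mult[OF h(1), of k] by simp
qed

(* The ideal of all a with g dvd a \<circ>\<^sub>p m contains the irreducible f but not 1,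
   so it is generated by f. *)
lemma cong_pcompose_imp_cong:
  fixes f g m r s :: "'a::field poly"
  assumes irr: "irreducible f" and gf: "g dvd pcompose f m" and g: "degree g > 0"
    and rs: "[pcompose r m = pcompose s m] (mod g)"
  shows "[r = s] (mod f)"
proof (rule ccontr)
  assume "\<not> [r = s] (mod f)"
  then have "\<not> f dvd r - s" by (simp add: cong_iff_dvd_diff)
  moreover have "g dvd pcompose (r - s) m"
    using rs by (simp add: cong_iff_dvd_diff pcompose_diff)
  ultimately have "g dvd pcompose 1 m"
    using gf by (intro ideal_contains_1_if_irreducible_not_dvd[OF irr, where P = "\<lambda>a. g dvd pcompose a m"])
      (auto simp: pcompose_add pcompose_mult)
  then show False
    using g by (simp add: poly_dvd_1)
qed

lemma finite_degree_less: "finite {p :: 'a::{finite,zero} poly. degree p < d}"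
proof -
  have "{p :: 'a poly. degree p < d} \<subseteq> Poly ` {xs. set xs \<subseteq> UNIV \<and> length xs = d}"
  proof
    fix p :: "'a poly"
    assume "p \<in> {p. degree p < d}"
    then have "length (coeffs p) \<le> d"
      by (cases "p = 0") (auto simp: length_coeffs_degree)
    moreover have "p = Poly (coeffs p @ replicate (d - length (coeffs p)) 0)"
      by (simp add: Poly_append_replicate_zero)
    ultimately show "p \<in> Poly ` {xs. set xs \<subseteq> UNIV \<and> length xs = d}"
      by (metis (mono_tags, lifting) le_add_diff_inverse length_append length_replicate
          mem_Collect_eq subset_UNIV rev_image_eqI)
  qed
  then show ?thesis
    by (rule finite_subset) (intro finite_imageI finite_lists_length_eq, simp)
qed

(* p \<mapsto> p \<circ>\<^sub>p m mod g is injective on the finite set of polynomials of degree < deg f,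
   hence onto it. *)
lemma exists_pcompose_cong:
  fixes f g m h :: "'a::{finite,field} poly"
  assumes irr: "irreducible f" and gf: "g dvd pcompose f m"
    and deg: "degree g = degree f" and f: "degree f > 0"
  shows "\<exists>B. [pcompose B m = h] (mod g)"
proof -
  define V where "V = {p :: 'a poly. degree p < degree f}"
  define \<Phi> where "\<Phi> p = pcompose p m mod g" for p
  have g0: "g \<noteq> 0" using deg f by auto
  have mod_in_V: "p mod g \<in> V" for p
    using degree_mod_less[OF g0, of p] deg f unfolding V_def by auto
  have "inj_on \<Phi> V"
  proof (rule inj_onI)
    fix p r assume p: "p \<in> V" and r: "r \<in> V" and "\<Phi> p = \<Phi> r"
    then have "[p = r] (mod f)"
      unfolding \<Phi>_def by (intro cong_pcompose_imp_cong[OF irr gf]) (auto simp: cong_def deg f)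
    then have "f dvd p - r" by (simp add: cong_iff_dvd_diff)
    moreover have "degree (p - r) < degree f"
      using p r unfolding V_def by (auto intro: le_less_trans[OF degree_diff_le_max])
    ultimately show "p = r"
      using dvd_imp_degree_le by force
  qed
  moreover have "\<Phi> ` V \<subseteq> V" unfolding \<Phi>_def using mod_in_V by auto
  ultimately have "\<Phi> ` V = V"
    using endo_inj_surj finite_degree_less unfolding V_def by blast
  then obtain B where "\<Phi> B = h mod g"
    using mod_in_V by (metis imageE)
  then show ?thesis unfolding \<Phi>_def cong_def by blast
qed

lemma reflect_poly_cong:
  fixes S m :: "'a::field poly"
  assumes XS: "[[:0, 1:] * S = 1] (mod m)"
  shows "[[:0, 1:] ^ degree h * pcompose h S = reflect_poly h] (mod m)"
proof (induction h rule: pCons_induct)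
  case (pCons a h)
  show ?case
  proof (cases "h = 0")
    case False
    have "[:0, 1:] ^ degree (pCons a h) * pcompose (pCons a h) S
        = [:a:] * [:0, 1:] ^ Suc (degree h) + ([:0, 1:] * S) * ([:0, 1:] ^ degree h * pcompose h S)"
      using False by (simp add: pcompose_pCons algebra_simps)
    also have "[\<dots> = [:a:] * [:0, 1:] ^ Suc (degree h) + 1 * reflect_poly h] (mod m)"
      by (intro cong_add cong_mult cong_refl XS pCons.IH)
    also have "[:a:] * [:0, 1:] ^ Suc (degree h) + 1 * reflect_poly h = reflect_poly (pCons a h)"
      using False by (simp add: reflect_poly_pCons' monom_altdef)
    finally show ?thesis .
  qed (simp add: reflect_poly_const)
qed simp

lemma pcompose_cong_0_if_dvd_reflect_poly:
  fixes S g h :: "'a::field poly"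
  assumes XS: "[[:0, 1:] * S = 1] (mod g)" and g: "g dvd reflect_poly h"
  shows "[pcompose h S = 0] (mod g)"
proof -
  let ?d = "degree h"
  have "[[:0, 1:] ^ ?d * pcompose h S = 0] (mod g)"
    using reflect_poly_cong[OF XS, of h] g by (simp add: cong_0_iff cong_dvd_iff)
  then have "[S ^ ?d * ([:0, 1:] ^ ?d * pcompose h S) = 0] (mod g)"
    using cong_scalar_left by fastforce
  moreover have "[([:0, 1:] * S) ^ ?d * pcompose h S = pcompose h S] (mod g)"
    using cong_mult[OF cong_pow[OF XS, of ?d] cong_refl, of "pcompose h S"] by simp
  ultimately show ?thesis
    by (metis (no_types, lifting) cong_sym cong_trans mult.assoc mult.commute power_mult_distrib)
qed

lemma exists_inverse_X_cong:
  fixes f :: "'a::field poly"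
  assumes "poly f 0 \<noteq> 0"
  shows "\<exists>R. [[:0, 1:] * R = 1] (mod f)"
proof -
  obtain c f' where f: "f = pCons c f'" by (cases f)
  with assms have "[:0, 1:] * Polynomial.smult (- inverse c) f' - 1 = Polynomial.smult (- inverse c) f"
    by (simp add: poly_eq_iff coeff_pCons split: nat.split)
  then show ?thesis
    by (metis cong_iff_dvd_diff dvd_smult dvd_refl)
qed

lemma cong_map_poly:
  fixes p r m :: "'a::field poly"
  assumes c: "comm_ring_hom c" and "[p = r] (mod m)"
  shows "[map_poly c p = map_poly c r] (mod map_poly c m)"
proof -
  interpret c: map_poly_comm_ring_hom c using c by (simp add: map_poly_comm_ring_hom_def)
  obtain k where "p - r = m * k" using assms(2) by (metis cong_iff_dvd_diff dvdE)
  then have "map_poly c p - map_poly c r = map_poly c m * map_poly c k"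
    by (metis c.hom_minus c.hom_mult)
  then show ?thesis by (simp add: cong_iff_dvd_diff)
qed

lemma inverse_X_pcompose_monom_cong:
  fixes f g R S :: "'a::field poly"
  assumes R: "[[:0, 1:] * R = 1] (mod f)" and gf: "g dvd pcompose f (monom 1 M)"
    and S: "[[:0, 1:] * S = 1] (mod g)"
  shows "[pcompose R (monom 1 M) = S ^ M] (mod g)"
proof -
  define XM :: "'a poly" where "XM = monom 1 M"
  have R': "[XM * pcompose R XM = 1] (mod g)"
    using cong_pcompose_right[OF R gf[folded XM_def]] by (simp add: pcompose_mult pcompose_X)
  have "XM = [:0, 1:] ^ M" by (simp add: XM_def monom_altdef)
  then have S': "[XM * S ^ M = 1] (mod g)"
    using cong_pow[OF S, of M] by (simp only: power_mult_distrib power_one)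
  have "[pcompose R XM = (XM * S ^ M) * pcompose R XM] (mod g)"
    using cong_sym[OF cong_scalar_right[OF S', of "pcompose R XM"]] by simp
  also have "(XM * S ^ M) * pcompose R XM = S ^ M * (XM * pcompose R XM)"
    by (simp only: ac_simps)
  also have "[\<dots> = S ^ M * 1] (mod g)"
    by (rule cong_scalar_left[OF R'])
  finally show ?thesis unfolding XM_def by simp
qed

lemma pcompose_map_poly_inverse_X_cong:
  fixes g B S :: "'a::field poly" and c :: "'a \<Rightarrow> 'a"
  assumes c: "comm_ring_hom c" and B: "[pcompose B (monom 1 M) = [:0, 1:]] (mod g)"
    and S: "[[:0, 1:] * S = 1] (mod g)" and g_recip: "g dvd reflect_poly (map_poly c g)"
  shows "[pcompose (map_poly c B) (S ^ M) = S] (mod g)"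
proof -
  interpret c: comm_ring_hom c by (rule c)
  have "[pcompose (map_poly c B) (monom 1 M) = [:0, 1:]] (mod map_poly c g)"
    using cong_map_poly[OF c B] by (simp add: map_poly_monom c.map_poly_pcompose)
  moreover have "g dvd pcompose (map_poly c g) S"
    using pcompose_cong_0_if_dvd_reflect_poly[OF S g_recip] by (simp add: cong_0_iff)
  ultimately have "[pcompose (pcompose (map_poly c B) (monom 1 M)) S = pcompose [:0, 1:] S] (mod g)"
    by (rule cong_pcompose_right)
  then show ?thesis by (simp only: pcompose_assoc[symmetric] pcompose_monom_1 pcompose_X)
qed

(* With S = \<theta>^-1 for a root \<theta> of g: B(\<theta>^M) = \<theta>, R(\<theta>^M) = \<theta>^-M and conj(B)(\<theta>^-M) = \<theta>^-1. *)
lemma exists_root_of_X_with_conj_inverse: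
  fixes f g R :: "'a::{finite,field} poly" and c :: "'a \<Rightarrow> 'a"
  assumes c: "comm_ring_hom c" and irr: "irreducible f"
    and gf: "g dvd pcompose f (monom 1 M)" and deg: "degree g = degree f" and f: "degree f > 0"
    and g0: "poly g 0 \<noteq> 0" and g_recip: "g dvd reflect_poly (map_poly c g)"
    and R: "[[:0, 1:] * R = 1] (mod f)"
  shows "\<exists>B. [B ^ M = [:0, 1:]] (mod f) \<and> [B * pcompose (map_poly c B) R = 1] (mod f)"
proof -
  define X :: "'a poly" where "X = [:0, 1:]"
  define XM :: "'a poly" where "XM = monom 1 M"
  have lift: "[r = s] (mod f)" if "[pcompose r XM = pcompose s XM] (mod g)" for r s
    using cong_pcompose_imp_cong[OF irr gf[folded XM_def]] that deg f by simp
  obtain B where B: "[pcompose B XM = X] (mod g)"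
    using exists_pcompose_cong[OF irr gf deg f] unfolding XM_def by blast
  obtain S where S: "[X * S = 1] (mod g)"
    using exists_inverse_X_cong[OF g0] unfolding X_def by blast
  have "pcompose (B ^ M) XM = pcompose B XM ^ M" by (rule pcompose_hom.hom_power)
  also have "[\<dots> = X ^ M] (mod g)" by (rule cong_pow[OF B])
  also have "X ^ M = pcompose X XM" by (simp add: X_def XM_def pcompose_X monom_altdef)
  finally have root: "[B ^ M = X] (mod f)" by (rule lift)
  have R_XM: "[pcompose R XM = S ^ M] (mod g)"
    using inverse_X_pcompose_monom_cong[OF R gf S[unfolded X_def]] unfolding XM_def .
  have B_S: "[pcompose (map_poly c B) (S ^ M) = S] (mod g)"
    using pcompose_map_poly_inverse_X_cong[OF c B[unfolded XM_def X_def] S[unfolded X_def] g_recip] .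
  have "pcompose (B * pcompose (map_poly c B) R) XM = pcompose B XM * pcompose (map_poly c B) (pcompose R XM)"
    by (simp add: pcompose_mult pcompose_assoc)
  also have "[\<dots> = X * pcompose (map_poly c B) (S ^ M)] (mod g)"
    by (intro cong_mult B cong_pcompose_left R_XM)
  also have "[X * pcompose (map_poly c B) (S ^ M) = X * S] (mod g)"
    by (rule cong_mult[OF cong_refl B_S])
  also have "[X * S = pcompose 1 XM] (mod g)"
    unfolding pcompose_1 by (rule S)
  finally have "[B * pcompose (map_poly c B) R = 1] (mod f)" by (rule lift)
  with root show ?thesis unfolding X_def by blast
qed

section \<open>The Frobenius map of the field with q^2 elements\<close>

(* Translation x \<mapsto> x + 1 permutes the field, so summing gives card \<cdot> 1 = 0. *)
lemma of_nat_card_UNIV: "of_nat (card (UNIV :: 'a::{finite,ring_1} set)) = (0 :: 'a)"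
proof -
  have "(\<Sum>x\<in>UNIV. x) = (\<Sum>x\<in>UNIV. x + (1 :: 'a))"
    by (rule sum.reindex_bij_witness[of _ "\<lambda>x. x + 1" "\<lambda>x. x - 1"]) auto
  then show ?thesis by (simp add: sum.distrib)
qed

lemma CHAR_eq_if_card_eq_prime_power:
  assumes "prime p" and "card (UNIV :: 'a::{finite,field} set) = p ^ k"
  shows "CHAR('a) = p"
proof -
  have "prime CHAR('a)" by (simp add: finite_imp_CHAR_pos prime_CHAR_semidom)
  moreover have "CHAR('a) dvd p ^ k"
    using of_nat_card_UNIV[where 'a = 'a] unfolding assms(2) of_nat_eq_0_iff_char_dvd .
  ultimately show ?thesis
    using assms(1) by (meson prime_dvd_power primes_dvd_imp_eq)
qed

lemma comm_ring_hom_qconj: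
  assumes "prime CHAR('a::field)" and "q = CHAR('a) ^ k"
  shows "comm_ring_hom (qconj q :: 'a \<Rightarrow> 'a)"
proof -
  have "q > 0" using assms by (simp add: prime_gt_0_nat)
  then show ?thesis
    using freshmans_dream'[OF assms] by unfold_locales (auto simp: qconj_def power_mult_distrib)
qed

lemma dvd_reflect_poly_qconj:
  fixes g :: "'a::field poly"
  assumes "poly_tilde q g = g" and "poly g 0 \<noteq> 0"
  shows "g dvd reflect_poly (poly_qconj q g)"
proof -
  have "qconj q (poly g 0) \<noteq> 0" using assms(2) by (simp add: qconj_def)
  then have "reflect_poly (poly_qconj q g) = Polynomial.smult (qconj q (poly g 0)) g"
    using arg_cong[OF assms(1)[unfolded poly_tilde_def], of "Polynomial.smult (qconj q (poly g 0))"]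
    by simp
  then show ?thesis by (simp add: dvd_smult)
qed

section \<open>Polynomials in a unitary matrix\<close>

lemma antidiag_conj_transpose_eq:
  assumes C: "C \<in> unitary_group q n" and N: "N \<in> carrier_mat n n" and NC: "N * C = 1\<^sub>m n"
  shows "antidiag n * transpose_mat (mat_qconj q C) = N * antidiag n"
proof -
  define L Ct where "L = (antidiag n :: 'a mat)" and "Ct = transpose_mat (mat_qconj q C)"
  have C': "C \<in> carrier_mat n n" and CU: "C * L * Ct = L"
    using C unfolding unitary_group_def L_def Ct_def by auto
  have L: "L \<in> carrier_mat n n" and Ct: "Ct \<in> carrier_mat n n"
    using C' by (auto simp: L_def antidiag_def Ct_def mat_qconj_def)
  have "L * Ct = (N * C) * L * Ct" using NC L by simp
  also have "\<dots> = N * (C * L * Ct)" using N C' L Ct by (simp add: assoc_mult_mat[of _ n n _ n _ n])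
  also have "\<dots> = N * L" unfolding CU ..
  finally show ?thesis unfolding L_def Ct_def .
qed

(* R(C) = C^-1, and unitarity turns conjugate transposition into inversion. *)
lemma poly_mat_in_unitary_group:
  fixes C :: "'a::field mat"
  assumes c: "comm_ring_hom (qconj q :: 'a \<Rightarrow> 'a)" and C: "C \<in> unitary_group q n"
    and f: "poly_mat f C = 0\<^sub>m n n" and R: "[[:0, 1:] * R = 1] (mod f)"
    and B: "[B * pcompose (poly_qconj q B) R = 1] (mod f)"
  shows "poly_mat B C \<in> unitary_group q n"
proof -
  interpret c: comm_ring_hom "qconj q :: 'a \<Rightarrow> 'a" by (rule c)
  define L Ct where "L = (antidiag n :: 'a mat)" and "Ct = transpose_mat (mat_qconj q C)"
  define \<alpha> \<beta> where "\<alpha> = poly_mat B C" and "\<beta> = poly_mat (pcompose (poly_qconj q B) R) C"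
  have C': "C \<in> carrier_mat n n" using C unfolding unitary_group_def by auto
  have L: "L \<in> carrier_mat n n" and Ct: "Ct \<in> carrier_mat n n" and R': "poly_mat R C \<in> carrier_mat n n"
    and \<alpha>: "\<alpha> \<in> carrier_mat n n" and \<beta>: "\<beta> \<in> carrier_mat n n"
    using C' by (auto simp: L_def antidiag_def Ct_def mat_qconj_def \<alpha>_def \<beta>_def)
  have "poly_mat R C * C = poly_mat (R * [:0, 1:]) C"
    by (simp only: poly_mat_mult[OF C'] poly_mat_X[OF C'])
  also have "\<dots> = 1\<^sub>m n"
    using R poly_mat_cong[OF C' f] by (simp add: mult.commute poly_mat_1[OF C'])
  finally have "L * Ct = poly_mat R C * L"
    using antidiag_conj_transpose_eq[OF C R'] unfolding L_def Ct_def by simp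
  then have intertwine: "L * poly_mat (poly_qconj q B) Ct = \<beta> * L"
    using poly_mat_intertwine[OF L Ct R'] by (simp add: \<beta>_def poly_mat_pcompose[OF C'])
  have conj: "transpose_mat (mat_qconj q \<alpha>) = poly_mat (poly_qconj q B) Ct"
    using c.map_mat_poly_mat[OF C', of B] transpose_poly_mat[of "mat_qconj q C" n] C'
    by (simp add: \<alpha>_def Ct_def mat_qconj_def poly_qconj_def)
  have \<alpha>\<beta>: "\<alpha> * \<beta> = 1\<^sub>m n"
    using B poly_mat_cong[OF C' f]
    by (simp add: \<alpha>_def \<beta>_def poly_mat_mult[OF C', symmetric] poly_mat_1[OF C'])
  have "\<alpha> * L * transpose_mat (mat_qconj q \<alpha>) = \<alpha> * (L * poly_mat (poly_qconj q B) Ct)"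
    unfolding conj using \<alpha> L Ct by (simp add: assoc_mult_mat[of _ n n _ n _ n])
  also have "\<dots> = (\<alpha> * \<beta>) * L"
    unfolding intertwine using \<alpha> \<beta> L by (simp add: assoc_mult_mat[of _ n n _ n _ n])
  finally have "\<alpha> * L * transpose_mat (mat_qconj q \<alpha>) = L"
    using L by (simp add: \<alpha>\<beta>)
  moreover have "invertible_mat \<alpha>"
    using invertible_poly_mat[OF C'] \<alpha>\<beta> unfolding \<alpha>_def \<beta>_def by blast
  ultimately show ?thesis
    using \<alpha> unfolding unitary_group_def \<alpha>_def L_def by auto
qed

theorem lemma4p2:
  fixes q M d :: nat and f :: "'a::{finite,field} poly" and C :: "'a mat"
  assumes q_pp: "\<exists>p k. prime p \<and> 0 < k \<and> q = p ^ k"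
    and card: "card (UNIV :: 'a set) = q ^ 2"
    and M: "M \<ge> 2"
    and f_scim: "SCIM q f" and f_deg: "degree f = d" and d_odd: "odd d"
    and g_ex: "\<exists>g. g dvd pcompose f (monom 1 M) \<and> SCIM q g \<and> degree g = d"
    and C_U: "C \<in> unitary_group q d"
    and C_char: "char_poly C = f"
  shows "\<exists>\<alpha> \<in> unitary_group q d. \<alpha> ^\<^sub>m M = C"
proof -
  obtain p k where p: "prime p" and q: "q = p ^ k" using q_pp by blast
  have "CHAR('a) = p"
    using CHAR_eq_if_card_eq_prime_power[OF p] card by (simp add: q power_mult[symmetric])
  then have c: "comm_ring_hom (qconj q :: 'a \<Rightarrow> 'a)" using comm_ring_hom_qconj p q by blast
  obtain g where gf: "g dvd pcompose f (monom 1 M)" and g: "SCIM q g" "degree g = d" using g_ex by blast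
  have C: "C \<in> carrier_mat d d" using C_U by (simp add: unitary_group_def)
  have "d > 0" using d_odd by (cases d) auto
  obtain R where R: "[[:0, 1:] * R = 1] (mod f)"
    using f_scim exists_inverse_X_cong unfolding SCIM_def by blast
  have irr: "irreducible f" using f_scim by (simp add: SCIM_def)
  have g0: "poly g 0 \<noteq> 0" and g_recip: "g dvd reflect_poly (map_poly (qconj q) g)"
    using g dvd_reflect_poly_qconj unfolding SCIM_def poly_qconj_def by auto
  obtain B where root: "[B ^ M = [:0, 1:]] (mod f)"
    and B: "[B * pcompose (map_poly (qconj q) B) R = 1] (mod f)"
    using exists_root_of_X_with_conj_inverse[OF c irr gf _ _ g0 g_recip R] g(2) f_deg \<open>d > 0\<close> by auto
  have f: "poly_mat f C = 0\<^sub>m d d" using cayley_hamilton[OF C] C_char by simp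
  have "poly_mat B C ^\<^sub>m M = C"
    using poly_mat_cong[OF C f root] by (simp add: poly_mat_power[OF C, symmetric] poly_mat_X[OF C])
  then show ?thesis using poly_mat_in_unitary_group[OF c C_U f R B[folded poly_qconj_def]] by blast
qed

end
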